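(* Let $H$ be a quasitriangular Hopf algebra with universal R-matrix $\mathcal R=\mathcal R^{[1]}\otimes\mathcal R^{[2]}\in H\otimes H$, and let $H^*$ be a Hopf algebra in nondegenerate duality with $H$ (e.g. $H$ finite-dimensional). Let $D(H)$, the covariant algebra $\underline{H^*}$, the actions and the map $Q$ be as defined in the context. Then $Q:\underline{H^*}\to H$ is a map of covariant algebras: it is an algebra homomorphism from $\underline{H^*}$ to $H$, and for all $h\in H$, $a,b\in H^*$, $$Q\big((h\otimes a)\triangleright b\big)=(h\otimes a)\triangleright Q(b),$$ where on the left the action of $D(H)$ on $\underline{H^*}$ is used and on the right the action of $D(H)$ on $H$ is used.
   Context: Notation: $\Delta h=h_{(1)}\otimes h_{(2)}$ (Sweedler notation, with further indices for iterated coproducts), $S$ the antipode, $\langle\ ,\ \rangle$ the pairing between $H$ and $H^*$. For $x,y\in H^*$ write $\mathcal R(x, y)=\langle x,\mathcal R^{[1]}\rangle\langle y,\mathcal R^{[2]}\rangle$. The quantum double $D(H)=H\bowtie H^{*\mathrm{op}}$ is the Hopf algebra built on $H\otimes H^*$ with the tensor product coproduct, the Hopf structure of $H$ and of $H^{*\mathrm{op}}$ (the opposite product of $H^*$) on the two factors, and product $$(h\otimes a)(g\otimes b)=hg_{(2)}\otimes b\,a_{(2)}\,\langle g_{(1)},a_{(1)}\rangle\langle Sg_{(3)},a_{(3)}\rangle,\qquad h,g\in H,\ a,b\in H^*,$$ where $b\,a_{(2)}$ is the product in $H^*$. $D(H)$ acts on the algebra $H$ by $(h\otimes a)\triangleright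 \phi=\langle \phi_{(1)},a\rangle\, h_{(1)}\phi_{(2)}Sh_{(2)}$ for $\phi\in H$ (coproduct of $H$). The algebra $\underline{H^*}$ is the vector space $H^*$ with the product $a\,\underline{\cdot}\,b=a_{(2)}b_{(2)}\,\mathcal R\big((Sa_{(1)})a_{(3)}, Sb_{(1)}\big)$, and $D(H)$ acts on it by $$(h\otimes a)\triangleright b=b_{(3)}\,\langle h,(Sb_{(2)})b_{(4)}\rangle\,\mathcal R(a_{(1)},b_{(1)})\,\mathcal R(b_{(5)},a_{(2)}).$$ Let $\mathcal Q=\mathcal R_{21}\mathcal R=\mathcal Q^{[1]}\otimes\mathcal Q^{[2]}\in H\otimes H$ and define $Q:H^*\to H$ by $Q(a)=\langle a,\mathcal Q^{[1]}\rangle\mathcal Q^{[2]}$. A covariant system means a Hopf algebra acting on an algebra $A$ with $h\triangleright(ab)=(h_{(1)}\triangleright a)(h_{(2)}\triangleright b)$ and $h\triangleright 1=\epsilon(h)1$. *)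

theory Defs
  imports Complex_Main
begin

text \<open>Elements of tensor powers are represented by finite
  lists of simple tensors (their sum); two such lists denote the same tensor iff all
  multilinear forms agree on them (intrinsic equality in the tensor product).\<close>

record ('k, 'v) hopf =
  hscl :: "'k \<Rightarrow> 'v \<Rightarrow> 'v"
  hmul :: "'v \<Rightarrow> 'v \<Rightarrow> 'v"
  hone :: "'v"
  hcop :: "'v \<Rightarrow> ('v \<times> 'v) list"
  heps :: "'v \<Rightarrow> 'k"
  hant :: "'v \<Rightarrow> 'v"

definition lin_map ::
  "('k::field \<Rightarrow> 'u::ab_group_add \<Rightarrow> 'u) \<Rightarrow> ('k \<Rightarrow> 'w::ab_group_add \<Rightarrow> 'w) \<Rightarrow> ('u \<Rightarrow> 'w) \<Rightarrow> bool" where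
  "lin_map s t f \<longleftrightarrow> (\<forall>x y. f (x + y) = f x + f y) \<and> (\<forall>c x. f (s c x) = t c (f x))"

definition bilin_map ::
  "('k::field \<Rightarrow> 'u::ab_group_add \<Rightarrow> 'u) \<Rightarrow> ('k \<Rightarrow> 'v::ab_group_add \<Rightarrow> 'v)
    \<Rightarrow> ('k \<Rightarrow> 'w::ab_group_add \<Rightarrow> 'w) \<Rightarrow> ('u \<Rightarrow> 'v \<Rightarrow> 'w) \<Rightarrow> bool" where
  "bilin_map s1 s2 t f \<longleftrightarrow> (\<forall>y. lin_map s1 t (\<lambda>x. f x y)) \<and> (\<forall>x. lin_map s2 t (f x))"

definition trilin_map ::
  "('k::field \<Rightarrow> 'u::ab_group_add \<Rightarrow> 'u) \<Rightarrow> ('k \<Rightarrow> 'w::ab_group_add \<Rightarrow> 'w) \<Rightarrow> ('u \<Rightarrow> 'u \<Rightarrow> 'u \<Rightarrow> 'w) \<Rightarrow> bool" where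
  "trilin_map s t f \<longleftrightarrow> (\<forall>y z. lin_map s t (\<lambda>x. f x y z)) \<and> (\<forall>x z. lin_map s t (\<lambda>y. f x y z))
      \<and> (\<forall>x y. lin_map s t (f x y))"

definition teq2 :: "('k::field \<Rightarrow> 'v::ab_group_add \<Rightarrow> 'v) \<Rightarrow> ('v \<times> 'v) list \<Rightarrow> ('v \<times> 'v) list \<Rightarrow> bool" where
  "teq2 s t u \<longleftrightarrow> (\<forall>f :: 'v \<Rightarrow> 'v \<Rightarrow> 'k. bilin_map s s (*) f \<longrightarrow>
      sum_list (map (\<lambda>(x, y). f x y) t) = sum_list (map (\<lambda>(x, y). f x y) u))"

definition teq3 :: "('k::field \<Rightarrow> 'v::ab_group_add \<Rightarrow> 'v) \<Rightarrow> ('v \<times> 'v \<times> 'v) list \<Rightarrow> ('v \<times> 'v \<times> 'v) list \<Rightarrow> bool" where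
  "teq3 s t u \<longleftrightarrow> (\<forall>f :: 'v \<Rightarrow> 'v \<Rightarrow> 'v \<Rightarrow> 'k. trilin_map s (*) f \<longrightarrow>
      sum_list (map (\<lambda>(x, y, z). f x y z) t) = sum_list (map (\<lambda>(x, y, z). f x y z) u))"

definition tmul2 :: "('v \<Rightarrow> 'v \<Rightarrow> 'v) \<Rightarrow> ('v \<times> 'v) list \<Rightarrow> ('v \<times> 'v) list \<Rightarrow> ('v \<times> 'v) list" where
  "tmul2 m t u = [(m x x', m y y'). (x, y) \<leftarrow> t, (x', y') \<leftarrow> u]"

definition tmul3 :: "('v \<Rightarrow> 'v \<Rightarrow> 'v) \<Rightarrow> ('v \<times> 'v \<times> 'v) list \<Rightarrow> ('v \<times> 'v \<times> 'v) list \<Rightarrow> ('v \<times> 'v \<times> 'v) list" where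
  "tmul3 m t u = [(m x x', m y y', m z z'). (x, y, z) \<leftarrow> t, (x', y', z') \<leftarrow> u]"

definition cop_l :: "('v \<Rightarrow> ('v \<times> 'v) list) \<Rightarrow> ('v \<times> 'v) list \<Rightarrow> ('v \<times> 'v \<times> 'v) list" where
  "cop_l d t = [(p, q, y). (x, y) \<leftarrow> t, (p, q) \<leftarrow> d x]"

definition cop_r :: "('v \<Rightarrow> ('v \<times> 'v) list) \<Rightarrow> ('v \<times> 'v) list \<Rightarrow> ('v \<times> 'v \<times> 'v) list" where
  "cop_r d t = [(x, p, q). (x, y) \<leftarrow> t, (p, q) \<leftarrow> d y]"

definition hopf_algebra :: "('k::field, 'v::ab_group_add) hopf \<Rightarrow> bool" where
  "hopf_algebra H \<longleftrightarrow>
     vector_space (hscl H)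
   \<and> bilin_map (hscl H) (hscl H) (hscl H) (hmul H)
   \<and> (\<forall>x y z. hmul H (hmul H x y) z = hmul H x (hmul H y z))
   \<and> (\<forall>x. hmul H (hone H) x = x \<and> hmul H x (hone H) = x)
   \<and> (\<forall>x y. teq2 (hscl H) (hcop H (x + y)) (hcop H x @ hcop H y))
   \<and> (\<forall>c x. teq2 (hscl H) (hcop H (hscl H c x)) [(hscl H c p, q). (p, q) \<leftarrow> hcop H x])
   \<and> (\<forall>x. teq3 (hscl H) (cop_l (hcop H) (hcop H x)) (cop_r (hcop H) (hcop H x)))
   \<and> lin_map (hscl H) (*) (heps H)
   \<and> (\<forall>x. sum_list [hscl H (heps H p) q. (p, q) \<leftarrow> hcop H x] = x
         \<and> sum_list [hscl H (heps H q) p. (p, q) \<leftarrow> hcop H x] = x)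
   \<and> (\<forall>x y. teq2 (hscl H) (hcop H (hmul H x y)) (tmul2 (hmul H) (hcop H x) (hcop H y)))
   \<and> teq2 (hscl H) (hcop H (hone H)) [(hone H, hone H)]
   \<and> (\<forall>x y. heps H (hmul H x y) = heps H x * heps H y)
   \<and> heps H (hone H) = 1
   \<and> lin_map (hscl H) (hscl H) (hant H)
   \<and> (\<forall>x. sum_list [hmul H (hant H p) q. (p, q) \<leftarrow> hcop H x] = hscl H (heps H x) (hone H)
         \<and> sum_list [hmul H p (hant H q). (p, q) \<leftarrow> hcop H x] = hscl H (heps H x) (hone H))"

definition hopf_pairing :: "('k::field, 'h::ab_group_add) hopf \<Rightarrow> ('k, 'a::ab_group_add) hopf
     \<Rightarrow> ('h \<Rightarrow> 'a \<Rightarrow> 'k) \<Rightarrow> bool" where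
  "hopf_pairing H A pr \<longleftrightarrow>
     bilin_map (hscl H) (hscl A) (*) pr
   \<and> (\<forall>h. (\<forall>a. pr h a = 0) \<longrightarrow> h = 0)
   \<and> (\<forall>a. (\<forall>h. pr h a = 0) \<longrightarrow> a = 0)
   \<and> (\<forall>g h a. pr (hmul H g h) a = sum_list [pr g x * pr h y. (x, y) \<leftarrow> hcop A a])
   \<and> (\<forall>h a b. pr h (hmul A a b) = sum_list [pr x a * pr y b. (x, y) \<leftarrow> hcop H h])
   \<and> (\<forall>a. pr (hone H) a = heps A a)
   \<and> (\<forall>h. pr h (hone A) = heps H h)
   \<and> (\<forall>h a. pr (hant H h) a = pr h (hant A a))"

definition quasitriangular :: "('k::field, 'h::ab_group_add) hopf \<Rightarrow> ('h \<times> 'h) list \<Rightarrow> bool" where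
  "quasitriangular H R \<longleftrightarrow>
     (\<exists>Ri. teq2 (hscl H) (tmul2 (hmul H) R Ri) [(hone H, hone H)]
          \<and> teq2 (hscl H) (tmul2 (hmul H) Ri R) [(hone H, hone H)])
   \<and> (\<forall>h. teq2 (hscl H) (tmul2 (hmul H) (map prod.swap (hcop H h)) R) (tmul2 (hmul H) R (hcop H h)))
   \<and> teq3 (hscl H) (cop_l (hcop H) R)
        (tmul3 (hmul H) [(x, hone H, y). (x, y) \<leftarrow> R] [(hone H, x, y). (x, y) \<leftarrow> R])
   \<and> teq3 (hscl H) (cop_r (hcop H) R)
        (tmul3 (hmul H) [(x, hone H, y). (x, y) \<leftarrow> R] [(x, y, hone H). (x, y) \<leftarrow> R])"

definition Rform :: "('h \<Rightarrow> 'a \<Rightarrow> 'k::field) \<Rightarrow> ('h \<times> 'h) list \<Rightarrow> 'a \<Rightarrow> 'a \<Rightarrow> 'k" where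
  "Rform pr R x y = sum_list [pr r1 x * pr r2 y. (r1, r2) \<leftarrow> R]"

definition Qmap :: "('k::field, 'h::ab_group_add) hopf \<Rightarrow> ('h \<Rightarrow> 'a \<Rightarrow> 'k) \<Rightarrow> ('h \<times> 'h) list \<Rightarrow> 'a \<Rightarrow> 'h" where
  "Qmap H pr R a = sum_list [hscl H (pr q1 a) q2. (q1, q2) \<leftarrow> tmul2 (hmul H) (map prod.swap R) R]"

definition bmul :: "('k::field, 'a::ab_group_add) hopf \<Rightarrow> ('h \<Rightarrow> 'a \<Rightarrow> 'k) \<Rightarrow> ('h \<times> 'h) list \<Rightarrow> 'a \<Rightarrow> 'a \<Rightarrow> 'a" where
  "bmul A pr R a b = sum_list
     [hscl A (Rform pr R (hmul A (hant A a1) a3) (hant A b1)) (hmul A a2 b2).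
        (a1, y) \<leftarrow> hcop A a, (a2, a3) \<leftarrow> hcop A y, (b1, b2) \<leftarrow> hcop A b]"

definition actH :: "('k::field, 'h::ab_group_add) hopf \<Rightarrow> ('h \<Rightarrow> 'a \<Rightarrow> 'k) \<Rightarrow> 'h \<Rightarrow> 'a \<Rightarrow> 'h \<Rightarrow> 'h" where
  "actH H pr h a \<phi> = sum_list
     [hscl H (pr p1 a) (hmul H (hmul H h1 p2) (hant H h2)). (p1, p2) \<leftarrow> hcop H \<phi>, (h1, h2) \<leftarrow> hcop H h]"

definition actA :: "('k::field, 'a::ab_group_add) hopf \<Rightarrow> ('h \<Rightarrow> 'a \<Rightarrow> 'k) \<Rightarrow> ('h \<times> 'h) list
     \<Rightarrow> 'h \<Rightarrow> 'a \<Rightarrow> 'a \<Rightarrow> 'a" where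
  "actA A pr R h a b = sum_list
     [hscl A (pr h (hmul A (hant A b2) b4) * Rform pr R a1 b1 * Rform pr R b5 a2) b3.
        (b1, y1) \<leftarrow> hcop A b, (b2, y2) \<leftarrow> hcop A y1, (b3, y3) \<leftarrow> hcop A y2, (b4, b5) \<leftarrow> hcop A y3,
        (a1, a2) \<leftarrow> hcop A a]"

end

theory Submission
  imports Defs
begin

text \<open>
  Both sides of each claimed identity are elements of \<open>H\<close>, and the pairing with \<open>H\<^sup>*\<close> is
  nondegenerate, so it suffices to compare their pairings with an arbitrary \<open>c \<in> H\<^sup>*\<close>.
  After pairing, every term becomes a finite Sweedler sum of a multilinear form evaluated
  on products of coproduct and R-matrix legs, and every Hopf and R-matrix axiom (stated in
  \<open>Defs\<close> as an equality of tensors) becomes a rewrite rule for such sums.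
  Multiplicativity of \<open>Q = R\<^sub>2\<^sub>1R\<close> then follows from \<open>(\<Delta>\<otimes>id)R = R\<^sub>1\<^sub>3R\<^sub>2\<^sub>3\<close>,
  \<open>(id\<otimes>\<Delta>)R = R\<^sub>1\<^sub>3R\<^sub>1\<^sub>2\<close>, \<open>(S\<otimes>S)R = R\<close> and the Yang--Baxter equation; covariance
  follows because \<open>Q\<close> commutes with \<open>\<Delta>(H)\<close>, which moves the adjoint action of \<open>H\<close> from
  one tensor leg of \<open>Q\<close> to the other.
\<close>

subsection \<open>Sums over lists of simple tensors\<close>

text \<open>\<open>tsum (hcop H x) F\<close> is the Sweedler sum \<open>\<Sum> F x\<^sub>1 x\<^sub>2\<close>.\<close>

definition tsum :: "('x \<times> 'y) list \<Rightarrow> ('x \<Rightarrow> 'y \<Rightarrow> 'k::comm_monoid_add) \<Rightarrow> 'k" where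
  "tsum L F = sum_list (map (\<lambda>(x, y). F x y) L)"

definition tsum3 :: "('x \<times> 'y \<times> 'z) list \<Rightarrow> ('x \<Rightarrow> 'y \<Rightarrow> 'z \<Rightarrow> 'k::comm_monoid_add) \<Rightarrow> 'k" where
  "tsum3 L F = sum_list (map (\<lambda>(x, y, z). F x y z) L)"

lemma tsum_Nil [simp]: "tsum [] F = 0"
  by (simp add: tsum_def)

lemma tsum_Cons [simp]: "tsum ((x, y) # L) F = F x y + tsum L F"
  by (simp add: tsum_def)

lemma tsum3_Nil [simp]: "tsum3 [] F = 0"
  by (simp add: tsum3_def)

lemma tsum3_Cons [simp]: "tsum3 ((x, y, z) # L) F = F x y z + tsum3 L F"
  by (simp add: tsum3_def)

lemma tsum_append [simp]: "tsum (L @ M) F = tsum L F + tsum M F"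
  by (simp add: tsum_def)

lemma tsum3_append [simp]: "tsum3 (L @ M) F = tsum3 L F + tsum3 M F"
  by (simp add: tsum3_def)

lemma tsum_zero [simp]: "tsum L (\<lambda>x y. 0) = 0"
  by (induction L) auto

lemma tsum_add: "tsum L (\<lambda>x y. F x y + G x y) = tsum L F + tsum L G"
  by (induction L) (auto simp: algebra_simps)

lemma tsum_mult_left: "(c::'k::comm_ring) * tsum L F = tsum L (\<lambda>x y. c * F x y)"
  by (induction L) (auto simp: algebra_simps)

lemma tsum_mult_right: "tsum L F * (c::'k::comm_ring) = tsum L (\<lambda>x y. F x y * c)"
  by (induction L) (auto simp: algebra_simps)

lemma tsum_cong: "(\<And>x y. (x, y) \<in> set L \<Longrightarrow> F x y = G x y) \<Longrightarrow> tsum L F = tsum L G"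
  by (induction L) auto

lemma tsum_swap: "tsum L (\<lambda>x y. tsum M (F x y)) = tsum M (\<lambda>u v. tsum L (\<lambda>x y. F x y u v))"
  by (induction L) (auto simp: tsum_add)

lemma tsum_rotate_dep:
  "tsum L (\<lambda>a b. tsum M (\<lambda>c d. tsum (N c d) (F a b c d)))
 = tsum M (\<lambda>c d. tsum (N c d) (\<lambda>e f. tsum L (\<lambda>a b. F a b c d e f)))"
  by (simp add: tsum_swap[of L])

lemma tsum_rotate:
  "tsum L (\<lambda>a b. tsum M (\<lambda>c d. tsum N (F a b c d)))
 = tsum M (\<lambda>c d. tsum N (\<lambda>e f. tsum L (\<lambda>a b. F a b c d e f)))"
  by (rule tsum_rotate_dep)

lemma tsum_reverse3:
  "tsum L (\<lambda>a b. tsum M (\<lambda>c d. tsum N (F a b c d)))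
 = tsum N (\<lambda>e f. tsum M (\<lambda>c d. tsum L (\<lambda>a b. F a b c d e f)))"
proof -
  have "tsum L (\<lambda>a b. tsum M (\<lambda>c d. tsum N (F a b c d)))
      = tsum M (\<lambda>c d. tsum N (\<lambda>e f. tsum L (\<lambda>a b. F a b c d e f)))"
    by (rule tsum_rotate)
  also have "\<dots> = tsum N (\<lambda>e f. tsum M (\<lambda>c d. tsum L (\<lambda>a b. F a b c d e f)))"
    by (rule tsum_swap)
  finally show ?thesis .
qed

lemma tsum_map: "tsum [(f x y, g x y). (x, y) \<leftarrow> L] F = tsum L (\<lambda>x y. F (f x y) (g x y))"
  by (induction L) auto

lemma tsum_map_swap: "tsum (map prod.swap L) F = tsum L (\<lambda>x y. F y x)"
  by (induction L) auto

lemma sum_list_map_case_prod: "sum_list (map (F \<circ> (\<lambda>(x, y). g x y)) L) = tsum L (\<lambda>x y. F (g x y))"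
  by (induction L) auto

lemma sum_list_map_concat:
  "sum_list (map f (concat xss)) = sum_list (map (\<lambda>xs. sum_list (map f xs)) xss)"
  by (induction xss) auto

lemma tsum_tmul2: "tsum (tmul2 m t u) F = tsum t (\<lambda>x y. tsum u (\<lambda>x' y'. F (m x x') (m y y')))"
  by (induction t) (auto simp: tmul2_def tsum_map)

lemma tsum3_map:
  "tsum3 [(f x y, g x y, h x y). (x, y) \<leftarrow> L] F = tsum L (\<lambda>x y. F (f x y) (g x y) (h x y))"
  by (induction L) auto

lemma tsum3_Pair: "tsum3 (map (Pair a) L) F = tsum L (F a)"
  by (induction L) auto

lemma tsum3_cop_l: "tsum3 (cop_l d t) F = tsum t (\<lambda>x y. tsum (d x) (\<lambda>p q. F p q y))"
proof -
  have "tsum3 [(p, q, y). (p, q) \<leftarrow> L] F = tsum L (\<lambda>p q. F p q y)" for L y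
    by (induction L) auto
  then show ?thesis
    by (induction t) (auto simp: cop_l_def)
qed

lemma tsum3_cop_r: "tsum3 (cop_r d t) F = tsum t (\<lambda>x y. tsum (d y) (\<lambda>p q. F x p q))"
  by (induction t) (auto simp: cop_r_def tsum3_Pair)

lemma tsum3_map3:
  "tsum3 [(f x y z, g x y z, h x y z). (x, y, z) \<leftarrow> L] F
 = tsum3 L (\<lambda>x y z. F (f x y z) (g x y z) (h x y z))"
  by (induction L) auto

lemma tsum3_tmul3:
  "tsum3 (tmul3 m T U) F = tsum3 T (\<lambda>x y z. tsum3 U (\<lambda>x' y' z'. F (m x x') (m y y') (m z z')))"
  by (induction T) (auto simp: tmul3_def tsum3_map3)

lemma teq2_tsum: "teq2 s L1 L2 \<Longrightarrow> bilin_map s s (*) G \<Longrightarrow> tsum L1 G = tsum L2 G"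
  unfolding teq2_def tsum_def by blast

lemma teq3_tsum3: "teq3 s L1 L2 \<Longrightarrow> trilin_map s (*) G \<Longrightarrow> tsum3 L1 G = tsum3 L2 G"
  unfolding teq3_def tsum3_def by blast

lemma lin_map_add: "lin_map s t f \<Longrightarrow> f (x + y) = f x + f y"
  by (simp add: lin_map_def)

lemma lin_map_scale: "lin_map s t f \<Longrightarrow> f (s c x) = t c (f x)"
  by (simp add: lin_map_def)

lemma lin_map_zero: "lin_map s t f \<Longrightarrow> f 0 = 0"
  using lin_map_add[of s t f 0 0] by simp

lemma lin_map_sum_list: "lin_map s t f \<Longrightarrow> f (sum_list xs) = sum_list (map f xs)"
  by (induction xs) (auto simp: lin_map_zero lin_map_add)

lemma lin_map_diff: "lin_map s t f \<Longrightarrow> f (x - y) = f x - f y"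
  using lin_map_add[of s t f "x - y" y] by (simp add: algebra_simps)

lemma lin_map_tsum: "lin_map s t f \<Longrightarrow> f (tsum L F) = tsum L (\<lambda>x y. f (F x y))"
  by (induction L) (auto simp: lin_map_zero lin_map_add)

locale qt_dual_pair =
  fixes H :: "('k::field, 'h::ab_group_add) hopf"
    and A :: "('k, 'a::ab_group_add) hopf"
    and pr :: "'h \<Rightarrow> 'a \<Rightarrow> 'k"
    and R :: "('h \<times> 'h) list"
  assumes hopf_H: "hopf_algebra H"
    and pairing: "hopf_pairing H A pr"
    and quasitriangular: "quasitriangular H R"
begin

abbreviation "m \<equiv> hmul H"
abbreviation "S \<equiv> hant H"
abbreviation "\<epsilon> \<equiv> heps H"
abbreviation "\<Delta> \<equiv> hcop H"
abbreviation "sc \<equiv> hscl H"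
abbreviation "e1 \<equiv> hone H"

abbreviation linH :: "('h \<Rightarrow> 'k) \<Rightarrow> bool" where "linH F \<equiv> lin_map sc (*) F"
abbreviation linHH :: "('h \<Rightarrow> 'h) \<Rightarrow> bool" where "linHH f \<equiv> lin_map sc sc f"
abbreviation bil :: "('h \<Rightarrow> 'h \<Rightarrow> 'k) \<Rightarrow> bool" where "bil G \<equiv> bilin_map sc sc (*) G"
abbreviation tril :: "('h \<Rightarrow> 'h \<Rightarrow> 'h \<Rightarrow> 'k) \<Rightarrow> bool" where "tril G \<equiv> trilin_map sc (*) G"

lemma m_assoc: "m (m x y) z = m x (m y z)"
  using hopf_H unfolding hopf_algebra_def by blast

lemma m_one_left [simp]: "m e1 x = x"
  using hopf_H unfolding hopf_algebra_def by blast

lemma m_one_right [simp]: "m x e1 = x"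
  using hopf_H unfolding hopf_algebra_def by blast

lemma eps_mult: "\<epsilon> (m x y) = \<epsilon> x * \<epsilon> y"
  using hopf_H unfolding hopf_algebra_def by blast

lemma eps_one [simp]: "\<epsilon> e1 = 1"
  using hopf_H unfolding hopf_algebra_def by blast

lemma pr_mult_H: "pr (m g h) a = tsum (hcop A a) (\<lambda>x y. pr g x * pr h y)"
  using pairing unfolding hopf_pairing_def tsum_def by blast

lemma pr_mult_A: "pr h (hmul A a b) = tsum (\<Delta> h) (\<lambda>x y. pr x a * pr y b)"
  using pairing unfolding hopf_pairing_def tsum_def by blast

lemma pr_one_A: "pr h (hone A) = \<epsilon> h"
  using pairing unfolding hopf_pairing_def by blast

lemma pr_antipode: "pr (S h) a = pr h (hant A a)"
  using pairing unfolding hopf_pairing_def by blast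

lemma lin_pr_right: "lin_map (hscl A) (*) (pr h)"
  using pairing unfolding hopf_pairing_def bilin_map_def by blast

lemma pr_sum_list: "pr h (sum_list xs) = sum_list (map (pr h) xs)"
  by (rule lin_map_sum_list[OF lin_pr_right])

lemma pr_scale_A: "pr h (hscl A c x) = c * pr h x"
  by (rule lin_map_scale[OF lin_pr_right])

lemma linHH_id: "linHH (\<lambda>x. x)"
  by (simp add: lin_map_def)

lemma linHH_mult_left: "linHH f \<Longrightarrow> linHH (\<lambda>x. m (f x) g)"
  using hopf_H unfolding hopf_algebra_def bilin_map_def lin_map_def by auto

lemma linHH_mult_right: "linHH f \<Longrightarrow> linHH (\<lambda>x. m g (f x))"
  using hopf_H unfolding hopf_algebra_def bilin_map_def lin_map_def by auto

lemma linHH_antipode: "linHH f \<Longrightarrow> linHH (\<lambda>x. S (f x))"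
  using hopf_H unfolding hopf_algebra_def lin_map_def by auto

lemma linH_pr: "linHH f \<Longrightarrow> linH (\<lambda>x. pr (f x) a)"
  using pairing unfolding hopf_pairing_def bilin_map_def lin_map_def by auto

lemma linH_eps: "linHH f \<Longrightarrow> linH (\<lambda>x. \<epsilon> (f x))"
  using hopf_H unfolding hopf_algebra_def lin_map_def by auto

lemma linH_mult_const_right: "linH F \<Longrightarrow> linH (\<lambda>x. F x * c)"
  unfolding lin_map_def by (auto simp: algebra_simps)

lemma linH_mult_const_left: "linH F \<Longrightarrow> linH (\<lambda>x. c * F x)"
  unfolding lin_map_def by (auto simp: algebra_simps)

lemma linH_add: "linH F \<Longrightarrow> linH G \<Longrightarrow> linH (\<lambda>x. F x + G x)"
  unfolding lin_map_def by (auto simp: algebra_simps)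

lemma linH_tsum:
  assumes "\<And>u v. linH (\<lambda>x. G x u v)"
  shows "linH (\<lambda>x. tsum L (G x))"
  unfolding lin_map_def
proof (intro conjI allI)
  fix x y
  have "tsum L (G (x + y)) = tsum L (\<lambda>u v. G x u v + G y u v)"
    using assms unfolding lin_map_def by (intro tsum_cong) auto
  then show "tsum L (G (x + y)) = tsum L (G x) + tsum L (G y)"
    by (simp add: tsum_add)
next
  fix c x
  have "tsum L (G (sc c x)) = tsum L (\<lambda>u v. c * G x u v)"
    using assms unfolding lin_map_def by (intro tsum_cong) auto
  then show "tsum L (G (sc c x)) = c * tsum L (G x)"
    by (simp add: tsum_mult_left)
qed

lemma linH_comp: "linH F \<Longrightarrow> linHH f \<Longrightarrow> linH (\<lambda>x. F (f x))"
  unfolding lin_map_def by auto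

lemma linH_bil1: "bil T \<Longrightarrow> linHH f \<Longrightarrow> linH (\<lambda>x. T (f x) y)"
  unfolding bilin_map_def lin_map_def by auto

lemma linH_bil2: "bil T \<Longrightarrow> linHH f \<Longrightarrow> linH (\<lambda>x. T y (f x))"
  unfolding bilin_map_def lin_map_def by auto

lemma linH_tril1: "tril T \<Longrightarrow> linHH f \<Longrightarrow> linH (\<lambda>x. T (f x) y z)"
  unfolding trilin_map_def lin_map_def by auto

lemma linH_tril2: "tril T \<Longrightarrow> linHH f \<Longrightarrow> linH (\<lambda>x. T y (f x) z)"
  unfolding trilin_map_def lin_map_def by auto

lemma linH_tril3: "tril T \<Longrightarrow> linHH f \<Longrightarrow> linH (\<lambda>x. T y z (f x))"
  unfolding trilin_map_def lin_map_def by auto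

lemma bilI: "(\<And>y. linH (\<lambda>x. G x y)) \<Longrightarrow> (\<And>x. linH (\<lambda>y. G x y)) \<Longrightarrow> bil G"
  unfolding bilin_map_def by auto

lemma trilI:
  "(\<And>y z. linH (\<lambda>x. G x y z)) \<Longrightarrow> (\<And>x z. linH (\<lambda>y. G x y z)) \<Longrightarrow> (\<And>x y. linH (\<lambda>z. G x y z))
   \<Longrightarrow> tril G"
  unfolding trilin_map_def by auto

lemma linH_cop:
  assumes G: "bil G" and f: "linHH f"
  shows "linH (\<lambda>x. tsum (\<Delta> (f x)) G)"
proof -
  have G_scale: "G (sc c p) q = c * G p q" for c p q
    using G unfolding bilin_map_def lin_map_def by auto
  have "tsum (\<Delta> (x + y)) G = tsum (\<Delta> x) G + tsum (\<Delta> y) G" for x y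
  proof -
    have "teq2 sc (\<Delta> (x + y)) (\<Delta> x @ \<Delta> y)"
      using hopf_H unfolding hopf_algebra_def by blast
    from teq2_tsum[OF this G] show ?thesis by simp
  qed
  moreover have "tsum (\<Delta> (sc c x)) G = c * tsum (\<Delta> x) G" for c x
  proof -
    have "teq2 sc (\<Delta> (sc c x)) [(sc c p, q). (p, q) \<leftarrow> \<Delta> x]"
      using hopf_H unfolding hopf_algebra_def by blast
    from teq2_tsum[OF this G] show ?thesis by (simp add: tsum_map G_scale tsum_mult_left)
  qed
  ultimately have "linH (\<lambda>x. tsum (\<Delta> x) G)"
    unfolding lin_map_def by blast
  then show ?thesis
    using f by (rule linH_comp)
qed

lemmas lin_intros = linHH_id linHH_mult_left linHH_mult_right linHH_antipode linH_pr linH_eps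
  linH_mult_const_right linH_mult_const_left linH_add linH_tsum linH_cop bilI trilI

lemma eq_by_pairing: "(\<And>a. pr x a = pr y a) \<Longrightarrow> x = y"
proof -
  assume "\<And>a. pr x a = pr y a"
  then have "pr (x - y) a = 0" for a
    by (simp add: lin_map_diff[OF linH_pr[OF linHH_id]])
  then have "x - y = 0"
    using pairing unfolding hopf_pairing_def by blast
  then show "x = y"
    by simp
qed

subsection \<open>Hopf and R-matrix axioms as rules for Sweedler sums\<close>

lemma counit_left:
  assumes F: "linH F"
  shows "tsum (\<Delta> x) (\<lambda>p q. \<epsilon> p * F q) = F x"
proof -
  have "sum_list [sc (\<epsilon> p) q. (p, q) \<leftarrow> \<Delta> x] = x"
    using hopf_H unfolding hopf_algebra_def by blast
  then have "F x = F (sum_list [sc (\<epsilon> p) q. (p, q) \<leftarrow> \<Delta> x])"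
    by simp
  then show ?thesis
    by (simp add: lin_map_sum_list[OF F] sum_list_map_case_prod lin_map_scale[OF F])
qed

lemma counit_right:
  assumes F: "linH F"
  shows "tsum (\<Delta> x) (\<lambda>p q. \<epsilon> q * F p) = F x"
proof -
  have "sum_list [sc (\<epsilon> q) p. (p, q) \<leftarrow> \<Delta> x] = x"
    using hopf_H unfolding hopf_algebra_def by blast
  then have "F x = F (sum_list [sc (\<epsilon> q) p. (p, q) \<leftarrow> \<Delta> x])"
    by simp
  then show ?thesis
    by (simp add: lin_map_sum_list[OF F] sum_list_map_case_prod lin_map_scale[OF F])
qed

lemma antipode_left:
  assumes F: "linH F"
  shows "tsum (\<Delta> x) (\<lambda>p q. F (m (S p) q)) = \<epsilon> x * F e1"
proof -
  have "sum_list [m (S p) q. (p, q) \<leftarrow> \<Delta> x] = sc (\<epsilon> x) e1"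
    using hopf_H unfolding hopf_algebra_def by blast
  moreover have "F (sum_list [m (S p) q. (p, q) \<leftarrow> \<Delta> x]) = tsum (\<Delta> x) (\<lambda>p q. F (m (S p) q))"
    by (simp add: lin_map_sum_list[OF F] sum_list_map_case_prod)
  ultimately show ?thesis
    by (simp add: lin_map_scale[OF F])
qed

lemma antipode_right:
  assumes F: "linH F"
  shows "tsum (\<Delta> x) (\<lambda>p q. F (m p (S q))) = \<epsilon> x * F e1"
proof -
  have "sum_list [m p (S q). (p, q) \<leftarrow> \<Delta> x] = sc (\<epsilon> x) e1"
    using hopf_H unfolding hopf_algebra_def by blast
  moreover have "F (sum_list [m p (S q). (p, q) \<leftarrow> \<Delta> x]) = tsum (\<Delta> x) (\<lambda>p q. F (m p (S q)))"
    by (simp add: lin_map_sum_list[OF F] sum_list_map_case_prod)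
  ultimately show ?thesis
    by (simp add: lin_map_scale[OF F])
qed

lemma antipode_one [simp]: "S e1 = e1"
proof (rule eq_by_pairing)
  fix c
  have "teq2 sc (\<Delta> e1) [(e1, e1)]"
    using hopf_H unfolding hopf_algebra_def by blast
  moreover have "bil (\<lambda>p q. pr (m (S p) q) c)"
    by (intro lin_intros)
  ultimately have "pr (S e1) c = tsum (\<Delta> e1) (\<lambda>p q. pr (m (S p) q) c)"
    by (simp add: teq2_tsum)
  also have "\<dots> = pr e1 c"
    by (subst antipode_left) (auto intro: lin_intros)
  finally show "pr (S e1) c = pr e1 c" .
qed

lemma coassoc:
  assumes G: "tril G"
  shows "tsum (\<Delta> x) (\<lambda>y z. tsum (\<Delta> y) (\<lambda>p q. G p q z))
       = tsum (\<Delta> x) (\<lambda>y z. tsum (\<Delta> z) (\<lambda>p q. G y p q))"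
proof -
  have "teq3 sc (cop_l \<Delta> (\<Delta> x)) (cop_r \<Delta> (\<Delta> x))"
    using hopf_H unfolding hopf_algebra_def by blast
  from teq3_tsum3[OF this G] show ?thesis
    by (simp add: tsum3_cop_l tsum3_cop_r)
qed

lemma cop_mult:
  assumes G: "bil G"
  shows "tsum (\<Delta> (m x y)) G = tsum (\<Delta> x) (\<lambda>p q. tsum (\<Delta> y) (\<lambda>p' q'. G (m p p') (m q q')))"
proof -
  have "teq2 sc (\<Delta> (m x y)) (tmul2 m (\<Delta> x) (\<Delta> y))"
    using hopf_H unfolding hopf_algebra_def by blast
  from teq2_tsum[OF this G] show ?thesis
    by (simp add: tsum_tmul2)
qed

lemma antipode_insert:
  assumes G: "bil G"
  shows "G (m a h) b = tsum (\<Delta> h) (\<lambda>w f. tsum (\<Delta> w) (\<lambda>c e. G (m a c) (m b (m e (S f)))))"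
proof -
  note lin = lin_intros linH_bil1[OF G] linH_bil2[OF G]
  have "G (m a h) b = tsum (\<Delta> h) (\<lambda>c d. \<epsilon> d * G (m a c) b)"
    by (rule counit_right[symmetric]) (intro lin)
  also have "\<dots> = tsum (\<Delta> h) (\<lambda>c d. tsum (\<Delta> d) (\<lambda>e f. G (m a c) (m b (m e (S f)))))"
  proof (rule tsum_cong)
    fix c d
    show "\<epsilon> d * G (m a c) b = tsum (\<Delta> d) (\<lambda>e f. G (m a c) (m b (m e (S f))))"
      using antipode_right[of "\<lambda>z. G (m a c) (m b z)"] by (simp add: lin)
  qed
  also have "\<dots> = tsum (\<Delta> h) (\<lambda>w f. tsum (\<Delta> w) (\<lambda>c e. G (m a c) (m b (m e (S f)))))"
    by (rule coassoc[symmetric]) (intro lin)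
  finally show ?thesis .
qed

lemma antipode_left_cop3:
  assumes F: "tril F"
  shows "tsum (\<Delta> h) (\<lambda>h1 h2. tsum (\<Delta> h2) (\<lambda>w f. tsum (\<Delta> w) (\<lambda>c e. F (m (S h1) c) e f)))
       = tsum (\<Delta> h) (\<lambda>e f. F e1 e f)"
proof -
  note lin = lin_intros linH_tril1[OF F] linH_tril2[OF F] linH_tril3[OF F]
  have "tsum (\<Delta> h) (\<lambda>h1 h2. tsum (\<Delta> h2) (\<lambda>w f. tsum (\<Delta> w) (\<lambda>c e. F (m (S h1) c) e f)))
      = tsum (\<Delta> h) (\<lambda>k f. tsum (\<Delta> k) (\<lambda>h1 w. tsum (\<Delta> w) (\<lambda>c e. F (m (S h1) c) e f)))"
    by (rule coassoc[symmetric]) (intro lin)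
  also have "\<dots> = tsum (\<Delta> h) (\<lambda>k f. tsum (\<Delta> k) (\<lambda>l e. tsum (\<Delta> l) (\<lambda>h1 c. F (m (S h1) c) e f)))"
    by (rule tsum_cong, rule coassoc[symmetric]) (intro lin)
  also have "\<dots> = tsum (\<Delta> h) (\<lambda>k f. tsum (\<Delta> k) (\<lambda>l e. \<epsilon> l * F e1 e f))"
    by (intro tsum_cong antipode_left lin)
  also have "\<dots> = tsum (\<Delta> h) (\<lambda>e f. F e1 e f)"
    by (intro tsum_cong counit_left lin)
  finally show ?thesis .
qed

lemma R_quasi_cocomm:
  assumes G: "bil G"
  shows "tsum (\<Delta> h) (\<lambda>p q. tsum R (\<lambda>x y. G (m q x) (m p y)))
       = tsum R (\<lambda>x y. tsum (\<Delta> h) (\<lambda>p q. G (m x p) (m y q)))"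
proof -
  have "teq2 sc (tmul2 m (map prod.swap (\<Delta> h)) R) (tmul2 m R (\<Delta> h))"
    using quasitriangular unfolding quasitriangular_def by blast
  from teq2_tsum[OF this G] show ?thesis
    by (simp add: tsum_tmul2 tsum_map_swap)
qed

lemma R_cop_left:
  assumes G: "tril G"
  shows "tsum R (\<lambda>x y. tsum (\<Delta> x) (\<lambda>p q. G p q y))
       = tsum R (\<lambda>x y. tsum R (\<lambda>x' y'. G x x' (m y y')))"
proof -
  have "teq3 sc (cop_l \<Delta> R)
      (tmul3 m [(x, e1, y). (x, y) \<leftarrow> R] [(e1, x, y). (x, y) \<leftarrow> R])"
    using quasitriangular unfolding quasitriangular_def by blast
  from teq3_tsum3[OF this G] show ?thesis
    by (simp add: tsum3_cop_l tsum3_tmul3 tsum3_map tsum3_Pair)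
qed

lemma R_cop_right:
  assumes G: "tril G"
  shows "tsum R (\<lambda>x y. tsum (\<Delta> y) (\<lambda>p q. G x p q))
       = tsum R (\<lambda>x y. tsum R (\<lambda>x' y'. G (m x x') y' y))"
proof -
  have "teq3 sc (cop_r \<Delta> R)
      (tmul3 m [(x, e1, y). (x, y) \<leftarrow> R] [(x, y, e1). (x, y) \<leftarrow> R])"
    using quasitriangular unfolding quasitriangular_def by blast
  from teq3_tsum3[OF this G] show ?thesis
    by (simp add: tsum3_cop_r tsum3_tmul3 tsum3_map tsum3_Pair)
qed

subsection \<open>Consequences of quasitriangularity\<close>

lemma R_cancel:
  assumes uv: "\<And>\<phi>. bil \<phi> \<Longrightarrow> tsum R (\<lambda>x y. \<phi> (m u x) (m v y)) = tsum R \<phi>"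
    and \<psi>: "bil \<psi>"
  shows "\<psi> u v = \<psi> e1 e1"
proof -
  obtain Ri where Ri: "teq2 sc (tmul2 m R Ri) [(e1, e1)]"
    using quasitriangular unfolding quasitriangular_def by blast
  have R_Ri: "tsum R (\<lambda>x y. tsum Ri (\<lambda>s t. G (m x s) (m y t))) = G e1 e1" if "bil G" for G
    using teq2_tsum[OF Ri that] by (simp add: tsum_tmul2)
  define \<phi> where "\<phi> a b = tsum Ri (\<lambda>s t. \<psi> (m a s) (m b t))" for a b
  have "bil \<phi>"
    unfolding \<phi>_def by (intro lin_intros linH_bil1[OF \<psi>] linH_bil2[OF \<psi>])
  have "bil (\<lambda>a b. \<psi> (m u a) (m v b))"
    by (intro lin_intros linH_bil1[OF \<psi>] linH_bil2[OF \<psi>])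
  from R_Ri[OF this]
  have "\<psi> u v = tsum R (\<lambda>x y. tsum Ri (\<lambda>s t. \<psi> (m u (m x s)) (m v (m y t))))"
    by simp
  also have "\<dots> = tsum R (\<lambda>x y. \<phi> (m u x) (m v y))"
    by (simp add: \<phi>_def m_assoc)
  also have "\<dots> = tsum R \<phi>"
    by (rule uv[OF \<open>bil \<phi>\<close>])
  also have "\<dots> = \<psi> e1 e1"
    unfolding \<phi>_def by (rule R_Ri[OF \<psi>])
  finally show ?thesis .
qed

text \<open>
  Applying \<open>\<epsilon>\<close> to the middle leg of \<open>(id\<otimes>\<Delta>)R = R\<^sub>1\<^sub>3R\<^sub>1\<^sub>2\<close> gives \<open>(u\<otimes>1)R = R\<close>
  for \<open>u = (id\<otimes>\<epsilon>)R\<close>, and \<open>R\<close> is invertible.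
\<close>

lemma R_counit_right:
  assumes F: "linH F"
  shows "tsum R (\<lambda>x y. \<epsilon> y * F x) = F e1"
proof -
  define u where "u = tsum R (\<lambda>x y. sc (\<epsilon> y) x)"
  have uR: "tsum R (\<lambda>x y. \<phi> (m u x) (m e1 y)) = tsum R \<phi>" if \<phi>: "bil \<phi>" for \<phi>
  proof -
    have u_left: "\<phi> (m u x') y' = tsum R (\<lambda>x y. \<epsilon> y * \<phi> (m x x') y')" for x' y'
    proof -
      have lin: "linH (\<lambda>z. \<phi> (m z x') y')"
        by (intro lin_intros linH_bil1[OF \<phi>])
      then show ?thesis
        unfolding u_def by (simp add: lin_map_tsum[OF lin] lin_map_scale[OF lin])
    qed
    have "tsum R \<phi> = tsum R (\<lambda>x y. tsum (\<Delta> y) (\<lambda>p q. \<epsilon> q * \<phi> x p))"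
      by (intro tsum_cong counit_right[symmetric] lin_intros linH_bil2[OF \<phi>])
    also have "\<dots> = tsum R (\<lambda>x y. tsum R (\<lambda>x' y'. \<epsilon> y * \<phi> (m x x') y'))"
      by (rule R_cop_right) (intro lin_intros linH_bil1[OF \<phi>] linH_bil2[OF \<phi>])
    also have "\<dots> = tsum R (\<lambda>x' y'. tsum R (\<lambda>x y. \<epsilon> y * \<phi> (m x x') y'))"
      by (rule tsum_swap)
    also have "\<dots> = tsum R (\<lambda>x' y'. \<phi> (m u x') y')"
      by (simp add: u_left)
    finally show ?thesis
      by simp
  qed
  have "bil (\<lambda>a b. F a * \<epsilon> b)"
    by (intro lin_intros linH_comp[OF F])
  from R_cancel[OF uR this] have "F u = F e1"
    by simp
  moreover have "F u = tsum R (\<lambda>x y. \<epsilon> y * F x)"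
    unfolding u_def by (simp add: lin_map_tsum[OF F] lin_map_scale[OF F])
  ultimately show ?thesis
    by simp
qed

lemma R_counit_left:
  assumes F: "linH F"
  shows "tsum R (\<lambda>x y. \<epsilon> x * F y) = F e1"
proof -
  define v where "v = tsum R (\<lambda>x y. sc (\<epsilon> x) y)"
  have vR: "tsum R (\<lambda>x y. \<phi> (m e1 x) (m v y)) = tsum R \<phi>" if \<phi>: "bil \<phi>" for \<phi>
  proof -
    have v_left: "\<phi> x' (m v y') = tsum R (\<lambda>x y. \<epsilon> x * \<phi> x' (m y y'))" for x' y'
    proof -
      have lin: "linH (\<lambda>z. \<phi> x' (m z y'))"
        by (intro lin_intros linH_bil2[OF \<phi>])
      then show ?thesis
        unfolding v_def by (simp add: lin_map_tsum[OF lin] lin_map_scale[OF lin])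
    qed
    have "tsum R \<phi> = tsum R (\<lambda>x y. tsum (\<Delta> x) (\<lambda>p q. \<epsilon> p * \<phi> q y))"
      by (intro tsum_cong counit_left[symmetric] lin_intros linH_bil1[OF \<phi>])
    also have "\<dots> = tsum R (\<lambda>x y. tsum R (\<lambda>x' y'. \<epsilon> x * \<phi> x' (m y y')))"
      by (rule R_cop_left) (intro lin_intros linH_bil1[OF \<phi>] linH_bil2[OF \<phi>])
    also have "\<dots> = tsum R (\<lambda>x' y'. tsum R (\<lambda>x y. \<epsilon> x * \<phi> x' (m y y')))"
      by (rule tsum_swap)
    also have "\<dots> = tsum R (\<lambda>x' y'. \<phi> x' (m v y'))"
      by (simp add: v_left)
    finally show ?thesis
      by simp
  qed
  have "bil (\<lambda>a b. \<epsilon> a * F b)"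
    by (intro lin_intros linH_comp[OF F])
  from R_cancel[OF vR this] have "F v = F e1"
    by simp
  moreover have "F v = tsum R (\<lambda>x y. \<epsilon> x * F y)"
    unfolding v_def by (simp add: lin_map_tsum[OF F] lin_map_scale[OF F])
  ultimately show ?thesis
    by simp
qed

lemma R_antipode_right_inverse:
  assumes G: "bil G"
  shows "tsum R (\<lambda>x y. tsum R (\<lambda>x' y'. G (m x x') (m (S y') y))) = G e1 e1"
proof -
  note lin = lin_intros linH_bil1[OF G] linH_bil2[OF G]
  have "tsum R (\<lambda>x y. tsum R (\<lambda>x' y'. G (m x x') (m (S y') y)))
      = tsum R (\<lambda>x y. tsum (\<Delta> y) (\<lambda>p q. G x (m (S p) q)))"
    by (rule R_cop_right[symmetric]) (intro lin)
  also have "\<dots> = tsum R (\<lambda>x y. \<epsilon> y * G x e1)"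
    by (intro tsum_cong antipode_left lin)
  also have "\<dots> = G e1 e1"
    by (rule R_counit_right) (intro lin)
  finally show ?thesis .
qed

lemma R_antipode_left_inverse:
  assumes G: "bil G"
  shows "tsum R (\<lambda>x y. tsum R (\<lambda>x' y'. G (m (S x) x') (m y y'))) = G e1 e1"
proof -
  note lin = lin_intros linH_bil1[OF G] linH_bil2[OF G]
  have "tsum R (\<lambda>x y. tsum R (\<lambda>x' y'. G (m (S x) x') (m y y')))
      = tsum R (\<lambda>x y. tsum (\<Delta> x) (\<lambda>p q. G (m (S p) q) y))"
    by (rule R_cop_left[symmetric]) (intro lin)
  also have "\<dots> = tsum R (\<lambda>x y. \<epsilon> x * G e1 y)"
    by (intro tsum_cong antipode_left lin)
  also have "\<dots> = G e1 e1"
    by (rule R_counit_left) (intro lin)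
  finally show ?thesis .
qed

text \<open>
  The antipode is antimultiplicative because both sides equal the pairing with
  \<open>S(g\<^sub>1h\<^sub>1) g\<^sub>2h\<^sub>2 S(h\<^sub>3) S(g\<^sub>3)\<close>.
\<close>

lemma antipode_rev_mult_expand:
  assumes F: "linH F"
  shows "F (m (S h) (S g))
       = tsum (\<Delta> g) (\<lambda>g1 g2. tsum (\<Delta> g2) (\<lambda>q g3. tsum (\<Delta> h) (\<lambda>h1 h2. tsum (\<Delta> h2) (\<lambda>q' h3.
           F (m (m (S (m g1 h1)) (m q q')) (m (S h3) (S g3)))))))"
    (is "_ = ?rhs")
proof -
  note lin = lin_intros linH_comp[OF F]
  define \<Phi> where "\<Phi> p q g2 = tsum (\<Delta> h) (\<lambda>h1 h2. tsum (\<Delta> h1) (\<lambda>p' q'.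
      F (m (m (S (m p p')) (m q q')) (m (S h2) (S g2)))))" for p q g2
  have "tril \<Phi>"
    unfolding \<Phi>_def by (intro lin)
  have counit_h: "tsum (\<Delta> h) (\<lambda>h1 h2. \<epsilon> h1 * F (m (S h2) (S g2))) = F (m (S h) (S g2))" for g2
    by (rule counit_left) (intro lin)
  have antipode_gh: "tsum (\<Delta> (m g1 h1)) (\<lambda>p q. F (m (m (S p) q) (m (S h2) (S g2))))
      = \<epsilon> (m g1 h1) * F (m (S h2) (S g2))" for g1 h1 h2 g2
    using antipode_left[of "\<lambda>z. F (m z (m (S h2) (S g2)))"] by (simp add: lin)
  have cop_gh: "tsum (\<Delta> (m g1 h1)) (\<lambda>p q. F (m (m (S p) q) (m (S h2) (S g2))))
      = tsum (\<Delta> g1) (\<lambda>p q. tsum (\<Delta> h1) (\<lambda>p' q'. F (m (m (S (m p p')) (m q q')) (m (S h2) (S g2)))))"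
    for g1 h1 h2 g2
    by (rule cop_mult) (intro lin)
  have "F (m (S h) (S g)) = tsum (\<Delta> g) (\<lambda>g1 g2. \<epsilon> g1 * F (m (S h) (S g2)))"
    by (rule counit_left[symmetric]) (intro lin)
  also have "\<dots> = tsum (\<Delta> g) (\<lambda>g1 g2. tsum (\<Delta> h) (\<lambda>h1 h2. \<epsilon> (m g1 h1) * F (m (S h2) (S g2))))"
    by (simp only: counit_h[symmetric] tsum_mult_left eps_mult mult.assoc)
  also have "\<dots> = tsum (\<Delta> g) (\<lambda>g1 g2. tsum (\<Delta> h) (\<lambda>h1 h2. tsum (\<Delta> g1) (\<lambda>p q.
      tsum (\<Delta> h1) (\<lambda>p' q'. F (m (m (S (m p p')) (m q q')) (m (S h2) (S g2)))))))"
    by (simp only: antipode_gh[symmetric] cop_gh)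
  also have "\<dots> = tsum (\<Delta> g) (\<lambda>g1 g2. tsum (\<Delta> g1) (\<lambda>p q. \<Phi> p q g2))"
    unfolding \<Phi>_def by (intro tsum_cong tsum_swap)
  also have "\<dots> = tsum (\<Delta> g) (\<lambda>g1 g2. tsum (\<Delta> g2) (\<lambda>q g3. \<Phi> g1 q g3))"
    by (rule coassoc[OF \<open>tril \<Phi>\<close>])
  also have "\<dots> = ?rhs"
    unfolding \<Phi>_def by (intro tsum_cong coassoc lin)
  finally show ?thesis .
qed

lemma antipode_mult_expand:
  assumes F: "linH F"
  shows "F (S (m g h))
       = tsum (\<Delta> g) (\<lambda>g1 g2. tsum (\<Delta> g2) (\<lambda>q g3. tsum (\<Delta> h) (\<lambda>h1 h2. tsum (\<Delta> h2) (\<lambda>q' h3.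
           F (m (m (S (m g1 h1)) (m q q')) (m (S h3) (S g3)))))))"
    (is "_ = ?rhs")
proof -
  note lin = lin_intros linH_comp[OF F]
  have antipode_h: "tsum (\<Delta> h2) (\<lambda>q' h3. F (m (m (S (m g1 h1)) (m q q')) (m (S h3) (S g3))))
      = \<epsilon> h2 * F (m (m (S (m g1 h1)) q) (S g3))" for g1 h1 h2 q g3
    using antipode_right[of "\<lambda>z. F (m (m (S (m g1 h1)) q) (m z (S g3)))"] by (simp add: lin m_assoc)
  have antipode_g: "tsum (\<Delta> g2) (\<lambda>q g3. F (m (m (S (m g1 h)) q) (S g3))) = \<epsilon> g2 * F (S (m g1 h))"
    for g1 g2
    using antipode_right[of "\<lambda>z. F (m (S (m g1 h)) z)"] by (simp add: lin m_assoc)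
  have "?rhs = tsum (\<Delta> g) (\<lambda>g1 g2. tsum (\<Delta> g2) (\<lambda>q g3. tsum (\<Delta> h) (\<lambda>h1 h2.
      \<epsilon> h2 * F (m (m (S (m g1 h1)) q) (S g3)))))"
    by (simp only: antipode_h)
  also have "\<dots> = tsum (\<Delta> g) (\<lambda>g1 g2. tsum (\<Delta> g2) (\<lambda>q g3. F (m (m (S (m g1 h)) q) (S g3))))"
    by (intro tsum_cong counit_right lin)
  also have "\<dots> = tsum (\<Delta> g) (\<lambda>g1 g2. \<epsilon> g2 * F (S (m g1 h)))"
    by (simp only: antipode_g)
  also have "\<dots> = F (S (m g h))"
    by (rule counit_right) (intro lin)
  finally show ?thesis ..
qed

lemma antipode_mult: "S (m g h) = m (S h) (S g)"
proof (rule eq_by_pairing)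
  fix c
  have pr_c: "linH (\<lambda>z. pr z c)"
    by (intro lin_intros)
  show "pr (S (m g h)) c = pr (m (S h) (S g)) c"
    by (simp only: antipode_mult_expand[OF pr_c] antipode_rev_mult_expand[OF pr_c])
qed

lemma R_antipode_antipode:
  assumes \<Phi>: "bil \<Phi>"
  shows "tsum R (\<lambda>x y. \<Phi> (S x) (S y)) = tsum R \<Phi>"
proof -
  note lin = lin_intros linH_bil1[OF \<Phi>] linH_bil2[OF \<Phi>]
  have SS_inverse: "tsum R (\<lambda>x y. tsum R (\<lambda>x' y'. \<Psi> (m (S x') (S x)) (m (S y') y))) = \<Psi> e1 e1"
    if \<Psi>: "bil \<Psi>" for \<Psi>
  proof -
    have "bil (\<lambda>u v. \<Psi> (S u) v)"
      by (intro lin_intros linH_bil1[OF \<Psi>] linH_bil2[OF \<Psi>])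
    from R_antipode_right_inverse[OF this] show ?thesis
      by (simp add: antipode_mult)
  qed
  have "tsum R (\<lambda>x y. \<Phi> (S x) (S y))
      = tsum R (\<lambda>x y. tsum R (\<lambda>a b. tsum R (\<lambda>c d. \<Phi> (m (S x) (m (S a) c)) (m (S y) (m b d)))))"
  proof (rule tsum_cong)
    fix x y
    have "bil (\<lambda>u v. \<Phi> (m (S x) u) (m (S y) v))"
      by (intro lin)
    from R_antipode_left_inverse[OF this]
    show "\<Phi> (S x) (S y) = tsum R (\<lambda>a b. tsum R (\<lambda>c d. \<Phi> (m (S x) (m (S a) c)) (m (S y) (m b d))))"
      by simp
  qed
  also have "\<dots> = tsum R (\<lambda>c d. tsum R (\<lambda>a b. tsum R (\<lambda>x y. \<Phi> (m (S x) (m (S a) c)) (m (S y) (m b d)))))"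
    by (rule tsum_reverse3)
  also have "\<dots> = tsum R (\<lambda>c d. \<Phi> (m e1 c) (m e1 d))"
  proof (rule tsum_cong)
    fix c d
    have "bil (\<lambda>u v. \<Phi> (m u c) (m v d))"
      by (intro lin)
    from SS_inverse[OF this]
    show "tsum R (\<lambda>a b. tsum R (\<lambda>x y. \<Phi> (m (S x) (m (S a) c)) (m (S y) (m b d)))) = \<Phi> (m e1 c) (m e1 d)"
      by (simp add: m_assoc)
  qed
  finally show ?thesis
    by simp
qed

lemma R_cop_left_antipode:
  assumes G: "tril G"
  shows "tsum R (\<lambda>x y. tsum (\<Delta> x) (\<lambda>p q. G (S p) q (S y)))
       = tsum R (\<lambda>x y. tsum R (\<lambda>x' y'. G x x' (m (S y') y)))"
proof -
  note lin = lin_intros linH_tril1[OF G] linH_tril2[OF G] linH_tril3[OF G]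
  have "tsum R (\<lambda>x y. tsum (\<Delta> x) (\<lambda>p q. G (S p) q (S y)))
      = tsum R (\<lambda>x y. tsum R (\<lambda>x' y'. G (S x) x' (S (m y y'))))"
    by (rule R_cop_left) (intro lin)
  also have "\<dots> = tsum R (\<lambda>x y. tsum R (\<lambda>x' y'. G (S x) x' (m (S y') (S y))))"
    by (simp add: antipode_mult)
  also have "\<dots> = tsum R (\<lambda>x y. tsum R (\<lambda>x' y'. G x x' (m (S y') y)))"
    by (rule R_antipode_antipode) (intro lin)
  finally show ?thesis .
qed

lemma yang_baxter:
  assumes G: "tril G"
  shows "tsum R (\<lambda>x y. tsum R (\<lambda>x' y'. tsum R (\<lambda>x'' y''. G (m x x') (m y x'') (m y' y''))))
       = tsum R (\<lambda>x y. tsum R (\<lambda>x' y'. tsum R (\<lambda>x'' y''. G (m x'' x) (m x' y) (m y' y''))))"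
proof -
  note lin = lin_intros linH_tril1[OF G] linH_tril2[OF G] linH_tril3[OF G]
  have "tsum R (\<lambda>x y. tsum R (\<lambda>x' y'. tsum R (\<lambda>x'' y''. G (m x x') (m y x'') (m y' y''))))
      = tsum R (\<lambda>x y. tsum R (\<lambda>x' y'. tsum (\<Delta> x') (\<lambda>p q. G (m x p) (m y q) y')))"
    by (intro tsum_cong R_cop_left[symmetric] lin)
  also have "\<dots> = tsum R (\<lambda>x' y'. tsum R (\<lambda>x y. tsum (\<Delta> x') (\<lambda>p q. G (m x p) (m y q) y')))"
    by (rule tsum_swap)
  also have "\<dots> = tsum R (\<lambda>x' y'. tsum (\<Delta> x') (\<lambda>p q. tsum R (\<lambda>x y. G (m q x) (m p y) y')))"
    by (intro tsum_cong R_quasi_cocomm[symmetric] lin)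
  also have "\<dots> = tsum R (\<lambda>x' y'. tsum R (\<lambda>x'' y''. tsum R (\<lambda>x y. G (m x'' x) (m x' y) (m y' y''))))"
    by (rule R_cop_left) (intro lin)
  also have "\<dots> = tsum R (\<lambda>x y. tsum R (\<lambda>x'' y''. tsum R (\<lambda>x' y'. G (m x'' x) (m x' y) (m y' y''))))"
    by (rule tsum_reverse3)
  also have "\<dots> = tsum R (\<lambda>x y. tsum R (\<lambda>x' y'. tsum R (\<lambda>x'' y''. G (m x'' x) (m x' y) (m y' y''))))"
    by (intro tsum_cong tsum_swap)
  finally show ?thesis .
qed

text \<open>
  Restricting \<open>tsum_swap\<close> to moving \<open>H\<^sup>* \<otimes> H\<^sup>*\<close>-sums outwards lets the simplifier use it
  without looping.
\<close>

lemma tsum_swap_H_A: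
  "tsum (L :: ('h \<times> 'h) list) (\<lambda>x y. tsum (M :: ('a \<times> 'a) list) (F x y))
 = tsum M (\<lambda>u v. tsum L (\<lambda>x y. F x y u v))"
  by (rule tsum_swap)

lemma pr_bmul:
  "pr h (bmul A pr R a b)
 = tsum R (\<lambda>r1 r2. tsum (\<Delta> r1) (\<lambda>p q. tsum (\<Delta> h) (\<lambda>s t.
     pr (m (S p) (m s q)) a * pr (m (S r2) t) b)))"
  unfolding bmul_def Rform_def
  apply (simp add: pr_sum_list pr_scale_A sum_list_map_concat tsum_def[symmetric] pr_mult_A
      pr_mult_H pr_antipode[symmetric] sum_list_map_case_prod)
  apply (simp only: tsum_mult_left tsum_mult_right tsum_swap_H_A)
  apply (rule sym, rule trans[OF tsum_rotate_dep], rule sym)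
  apply (intro tsum_cong)
  apply (rule trans[OF tsum_rotate_dep])
  apply (intro tsum_cong)
  apply (simp add: ac_simps)
  done

lemma pr_actA:
  "pr g (actA A pr R h a b)
 = tsum (\<Delta> h) (\<lambda>h1 h2. tsum R (\<lambda>r1 r2. tsum R (\<lambda>r1' r2'.
     pr (m r1 r2') a * pr (m r2 (m (m (S h1) (m g h2)) r1')) b)))"
proof -
  have "pr g (actA A pr R h a b)
      = tsum R (\<lambda>r1 r2. tsum R (\<lambda>r1' r2'. tsum (\<Delta> h) (\<lambda>h1 h2.
          pr (m r1 r2') a * pr (m r2 (m (S h1) (m g (m h2 r1')))) b)))"
    unfolding actA_def Rform_def
    apply (simp add: pr_sum_list pr_scale_A sum_list_map_concat tsum_def[symmetric] pr_mult_A
        pr_mult_H pr_antipode[symmetric] sum_list_map_case_prod)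
    apply (simp only: tsum_mult_left tsum_mult_right tsum_swap_H_A)
    apply (rule tsum_cong, rule tsum_cong, rule tsum_cong, rule tsum_cong, rule tsum_cong)
    apply (rule trans[OF tsum_swap])
    apply (intro tsum_cong)
    apply (simp add: ac_simps)
    done
  also have "\<dots> = tsum (\<Delta> h) (\<lambda>h1 h2. tsum R (\<lambda>r1 r2. tsum R (\<lambda>r1' r2'.
      pr (m r1 r2') a * pr (m r2 (m (m (S h1) (m g h2)) r1')) b)))"
    by (rule trans[OF tsum_rotate[symmetric]]) (simp add: m_assoc)
  finally show ?thesis .
qed

lemma pr_actH:
  "pr (actH H pr h a \<phi>) c
 = tsum (\<Delta> \<phi>) (\<lambda>p1 p2. tsum (\<Delta> h) (\<lambda>h1 h2. pr p1 a * pr (m (m h1 p2) (S h2)) c))"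
proof -
  have pr_c: "linH (\<lambda>z. pr z c)"
    by (intro lin_intros)
  show ?thesis
    unfolding actH_def
    by (simp add: lin_map_sum_list[OF pr_c] sum_list_map_concat tsum_def[symmetric]
        sum_list_map_case_prod lin_map_scale[OF pr_c])
qed

abbreviation Q :: "('h \<times> 'h) list" where
  "Q \<equiv> tmul2 m (map prod.swap R) R"

lemma tsum_Q: "tsum Q F = tsum R (\<lambda>x y. tsum R (\<lambda>x' y'. F (m y x') (m x y')))"
  by (simp add: tsum_tmul2 tsum_map_swap)

lemma lin_Qmap:
  assumes F: "linH F"
  shows "F (Qmap H pr R v) = tsum Q (\<lambda>q1 q2. pr q1 v * F q2)"
  unfolding Qmap_def
  by (simp add: lin_map_sum_list[OF F] sum_list_map_case_prod lin_map_scale[OF F])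

subsection \<open>Q is an algebra map\<close>

lemma Q_bmul_expand:
  assumes T: "tril T"
  shows "tsum Q (\<lambda>q1 q2. tsum R (\<lambda>r1 r2. tsum (\<Delta> r1) (\<lambda>p q. tsum (\<Delta> q1) (\<lambda>s t.
           T (m (S p) (m s q)) (m (S r2) t) q2))))
       = tsum R (\<lambda>x y. tsum R (\<lambda>x2 y2. tsum R (\<lambda>x' y'. tsum R (\<lambda>x3 y3. tsum R (\<lambda>r1 r2.
           tsum (\<Delta> r1) (\<lambda>p q. T (m (S p) (m (m y2 x') q)) (m (S r2) (m y x3)) (m (m x x2) (m y' y3))))))))"
    (is "_ = ?rhs")
proof -
  note lin = lin_intros linH_tril1[OF T] linH_tril2[OF T] linH_tril3[OF T]
  define B where "B x y' s1 t1 s2 t2 =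
      tsum R (\<lambda>r1 r2. tsum (\<Delta> r1) (\<lambda>p q. T (m (S p) (m (m s1 s2) q)) (m (S r2) (m t1 t2)) (m x y')))"
    for x y' s1 t1 s2 t2
  have "tsum R (\<lambda>r1 r2. tsum (\<Delta> r1) (\<lambda>p q. tsum (\<Delta> (m y x')) (\<lambda>s t.
          T (m (S p) (m s q)) (m (S r2) t) (m x y'))))
      = tsum (\<Delta> y) (\<lambda>s1 t1. tsum (\<Delta> x') (\<lambda>s2 t2. B x y' s1 t1 s2 t2))" for x y x' y'
  proof -
    have "tsum R (\<lambda>r1 r2. tsum (\<Delta> r1) (\<lambda>p q. tsum (\<Delta> (m y x')) (\<lambda>s t.
          T (m (S p) (m s q)) (m (S r2) t) (m x y'))))
      = tsum R (\<lambda>r1 r2. tsum (\<Delta> r1) (\<lambda>p q. tsum (\<Delta> y) (\<lambda>s1 t1. tsum (\<Delta> x') (\<lambda>s2 t2.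
          T (m (S p) (m (m s1 s2) q)) (m (S r2) (m t1 t2)) (m x y')))))"
      by (intro tsum_cong cop_mult lin)
    also have "\<dots> = tsum (\<Delta> y) (\<lambda>s1 t1. tsum (\<Delta> x') (\<lambda>s2 t2. B x y' s1 t1 s2 t2))"
      unfolding B_def by (rule trans[OF tsum_cong[OF tsum_rotate] tsum_rotate])
    finally show ?thesis .
  qed
  then have "tsum Q (\<lambda>q1 q2. tsum R (\<lambda>r1 r2. tsum (\<Delta> r1) (\<lambda>p q. tsum (\<Delta> q1) (\<lambda>s t.
          T (m (S p) (m s q)) (m (S r2) t) q2))))
      = tsum R (\<lambda>x y. tsum R (\<lambda>x' y'. tsum (\<Delta> y) (\<lambda>s1 t1. tsum (\<Delta> x') (\<lambda>s2 t2.
          B x y' s1 t1 s2 t2))))"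
    by (simp add: tsum_Q)
  also have "\<dots> = tsum R (\<lambda>x y. tsum (\<Delta> y) (\<lambda>s1 t1. tsum R (\<lambda>x' y'. tsum (\<Delta> x') (\<lambda>s2 t2.
      B x y' s1 t1 s2 t2))))"
    by (intro tsum_cong tsum_swap)
  also have "\<dots> = tsum R (\<lambda>x y. tsum R (\<lambda>x2 y2. tsum R (\<lambda>x' y'. tsum (\<Delta> x') (\<lambda>s2 t2.
      B (m x x2) y' y2 y s2 t2))))"
    unfolding B_def by (rule R_cop_right) (intro lin)
  also have "\<dots> = ?rhs"
    unfolding B_def by (intro tsum_cong R_cop_left lin)
  finally show ?thesis .
qed

lemma Q_bmul_braid:
  assumes T: "tril T"
  shows "tsum R (\<lambda>x y. tsum R (\<lambda>x2 y2. tsum R (\<lambda>x' y'. tsum R (\<lambda>x3 y3. tsum R (\<lambda>r1 r2.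
           tsum (\<Delta> r1) (\<lambda>p q. T (m (S p) (m (m y2 x') q)) (m (S r2) (m y x3)) (m (m x x2) (m y' y3))))))))
       = tsum R (\<lambda>x2 y2. tsum R (\<lambda>x y. tsum R (\<lambda>t1 t2. tsum R (\<lambda>x' y'. tsum R (\<lambda>x3 y3. tsum R (\<lambda>u1 u2.
           T (m (m y2 t1) (m x' u1)) (m (S u2) (m (m y t2) x3)) (m (m x2 x) (m y' y3))))))))"
    (is "?lhs = _")
proof -
  note lin = lin_intros linH_tril1[OF T] linH_tril2[OF T] linH_tril3[OF T]
  define B where "B x y x2 y2 x' y' x3 y3 t1 t2 u1 u2 =
      T (m t1 (m (m y2 x') u1)) (m (m (S u2) t2) (m y x3)) (m (m x x2) (m y' y3))"
    for x y x2 y2 x' y' x3 y3 t1 t2 u1 u2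
  have "tsum R (\<lambda>r1 r2. tsum (\<Delta> r1) (\<lambda>p q.
          T (m (S p) (m (m y2 x') q)) (m (S r2) (m y x3)) (m (m x x2) (m y' y3))))
      = tsum R (\<lambda>t1 t2. tsum R (\<lambda>u1 u2. B x y x2 y2 x' y' x3 y3 t1 t2 u1 u2))"
    for x y x2 y2 x' y' x3 y3
  proof -
    have "tril (\<lambda>\<alpha> \<beta> \<gamma>. T (m \<alpha> (m (m y2 x') \<beta>)) (m \<gamma> (m y x3)) (m (m x x2) (m y' y3)))"
      by (intro lin)
    from R_cop_left_antipode[OF this] show ?thesis
      by (simp add: B_def)
  qed
  then have "?lhs = tsum R (\<lambda>x y. tsum R (\<lambda>x2 y2. tsum R (\<lambda>x' y'. tsum R (\<lambda>x3 y3.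
      tsum R (\<lambda>t1 t2. tsum R (\<lambda>u1 u2. B x y x2 y2 x' y' x3 y3 t1 t2 u1 u2))))))"
    by simp
  also have "\<dots> = tsum R (\<lambda>x2 y2. tsum R (\<lambda>t1 t2. tsum R (\<lambda>x y. tsum R (\<lambda>x' y'. tsum R (\<lambda>x3 y3.
      tsum R (\<lambda>u1 u2. B x y x2 y2 x' y' x3 y3 t1 t2 u1 u2))))))"
    by (rule trans[OF tsum_swap], rule tsum_cong,
        rule trans[OF tsum_cong[OF tsum_cong[OF tsum_swap]]],
        rule trans[OF tsum_cong[OF tsum_swap]], rule tsum_swap)
  also have "\<dots> = tsum R (\<lambda>x2 y2. tsum R (\<lambda>x y. tsum R (\<lambda>t1 t2. tsum R (\<lambda>x' y'. tsum R (\<lambda>x3 y3.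
      tsum R (\<lambda>u1 u2. T (m (m y2 t1) (m x' u1)) (m (S u2) (m (m y t2) x3)) (m (m x2 x) (m y' y3))))))))"
  proof -
    define G where "G l1 l2 l3 = tsum R (\<lambda>x' y'. tsum R (\<lambda>x3 y3. tsum R (\<lambda>u1 u2.
        T (m l2 (m x' u1)) (m (S u2) (m l3 x3)) (m l1 (m y' y3)))))" for l1 l2 l3
    have "tril G"
      unfolding G_def by (intro lin)
    from yang_baxter[OF this] show ?thesis
      by (simp add: G_def B_def m_assoc)
  qed
  finally show ?thesis .
qed

lemma Q_bmul_cancel:
  assumes T: "tril T"
  shows "tsum R (\<lambda>x2 y2. tsum R (\<lambda>x y. tsum R (\<lambda>t1 t2. tsum R (\<lambda>x' y'. tsum R (\<lambda>x3 y3. tsum R (\<lambda>u1 u2.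
           T (m (m y2 t1) (m x' u1)) (m (S u2) (m (m y t2) x3)) (m (m x2 x) (m y' y3))))))))
       = tsum Q (\<lambda>q1 q2. tsum Q (\<lambda>q1' q2'. T q1 q1' (m q2 q2')))"
    (is "?lhs = _")
proof -
  note lin = lin_intros linH_tril1[OF T] linH_tril2[OF T] linH_tril3[OF T]
  have "?lhs = tsum R (\<lambda>x2 y2. tsum R (\<lambda>x' y'. tsum R (\<lambda>x y. tsum R (\<lambda>t1 t2. tsum R (\<lambda>x3 y3.
      tsum R (\<lambda>u1 u2. T (m (m y2 t1) (m x' u1)) (m (S u2) (m (m y t2) x3)) (m (m x2 x) (m y' y3))))))))"
    by (rule tsum_cong, rule trans[OF tsum_cong[OF tsum_swap]], rule tsum_swap)
  also have "\<dots> = tsum R (\<lambda>x2 y2. tsum R (\<lambda>x' y'. tsum R (\<lambda>t1 t2. tsum R (\<lambda>x y. tsum R (\<lambda>x3 y3.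
      tsum R (\<lambda>u1 u2. T (m y2 (m (m x' t1) u1)) (m (S u2) (m (m t2 y) x3)) (m x2 (m (m y' x) y3))))))))"
  proof (rule tsum_cong)
    fix x2 y2
    define G where "G l1 l2 l3 = tsum R (\<lambda>x3 y3. tsum R (\<lambda>u1 u2.
        T (m y2 (m l1 u1)) (m (S u2) (m l3 x3)) (m x2 (m l2 y3))))" for l1 l2 l3
    have "tril G"
      unfolding G_def by (intro lin)
    from yang_baxter[OF this] show "tsum R (\<lambda>x' y'. tsum R (\<lambda>x y. tsum R (\<lambda>t1 t2. tsum R (\<lambda>x3 y3.
        tsum R (\<lambda>u1 u2. T (m (m y2 t1) (m x' u1)) (m (S u2) (m (m y t2) x3)) (m (m x2 x) (m y' y3)))))))
      = tsum R (\<lambda>x' y'. tsum R (\<lambda>t1 t2. tsum R (\<lambda>x y. tsum R (\<lambda>x3 y3.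
        tsum R (\<lambda>u1 u2. T (m y2 (m (m x' t1) u1)) (m (S u2) (m (m t2 y) x3)) (m x2 (m (m y' x) y3)))))))"
      by (simp add: G_def m_assoc)
  qed
  also have "\<dots> = tsum R (\<lambda>x2 y2. tsum R (\<lambda>x' y'. tsum R (\<lambda>x y. tsum R (\<lambda>x3 y3. tsum R (\<lambda>t1 t2.
      tsum R (\<lambda>u1 u2. T (m y2 (m (m x' t1) u1)) (m (S u2) (m (m t2 y) x3)) (m x2 (m (m y' x) y3))))))))"
    by (rule tsum_cong, rule tsum_cong, rule trans[OF tsum_swap], rule tsum_cong, rule tsum_swap)
  also have "\<dots> = tsum R (\<lambda>x2 y2. tsum R (\<lambda>x' y'. tsum R (\<lambda>x y. tsum R (\<lambda>x3 y3.
      T (m y2 x') (m y x3) (m (m x2 y') (m x y3))))))"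
  proof (intro tsum_cong)
    fix x2 y2 x' y' x y x3 y3
    have "bil (\<lambda>\<alpha> \<beta>. T (m (m y2 x') \<alpha>) (m \<beta> (m y x3)) (m (m x2 y') (m x y3)))"
      by (intro lin)
    from R_antipode_right_inverse[OF this] show "tsum R (\<lambda>t1 t2. tsum R (\<lambda>u1 u2.
        T (m y2 (m (m x' t1) u1)) (m (S u2) (m (m t2 y) x3)) (m x2 (m (m y' x) y3))))
      = T (m y2 x') (m y x3) (m (m x2 y') (m x y3))"
      by (simp add: m_assoc)
  qed
  also have "\<dots> = tsum Q (\<lambda>q1 q2. tsum Q (\<lambda>q1' q2'. T q1 q1' (m q2 q2')))"
    by (simp add: tsum_Q)
  finally show ?thesis .
qed

lemma Qmap_bmul: "Qmap H pr R (bmul A pr R a b) = m (Qmap H pr R a) (Qmap H pr R b)"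
proof (rule eq_by_pairing)
  fix c
  define T where "T \<alpha> \<beta> \<gamma> = pr \<alpha> a * pr \<beta> b * pr \<gamma> c" for \<alpha> \<beta> \<gamma>
  have "tril T"
    unfolding T_def by (intro lin_intros)
  have pr_c: "linH (\<lambda>z. pr z c)" and pr_Qb_c: "linH (\<lambda>z. pr (m z (Qmap H pr R b)) c)"
    and pr_c_mult: "linH (\<lambda>z. pr (m w z) c)" for w
    by (intro lin_intros)+
  have "pr (Qmap H pr R (bmul A pr R a b)) c = tsum Q (\<lambda>q1 q2. pr q1 (bmul A pr R a b) * pr q2 c)"
    by (rule lin_Qmap[OF pr_c])
  also have "\<dots> = tsum Q (\<lambda>q1 q2. tsum R (\<lambda>r1 r2. tsum (\<Delta> r1) (\<lambda>p q. tsum (\<Delta> q1) (\<lambda>s t.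
      T (m (S p) (m s q)) (m (S r2) t) q2))))"
    by (simp add: pr_bmul T_def tsum_mult_right)
  also have "\<dots> = tsum Q (\<lambda>q1 q2. tsum Q (\<lambda>q1' q2'. T q1 q1' (m q2 q2')))"
    unfolding Q_bmul_expand[OF \<open>tril T\<close>] Q_bmul_braid[OF \<open>tril T\<close>] Q_bmul_cancel[OF \<open>tril T\<close>] ..
  also have "\<dots> = tsum Q (\<lambda>q1 q2. pr q1 a * pr (m q2 (Qmap H pr R b)) c)"
    by (simp add: lin_Qmap[OF pr_c_mult] T_def tsum_mult_left mult.assoc)
  also have "\<dots> = pr (m (Qmap H pr R a) (Qmap H pr R b)) c"
    by (rule lin_Qmap[OF pr_Qb_c, symmetric])
  finally show "pr (Qmap H pr R (bmul A pr R a b)) c = pr (m (Qmap H pr R a) (Qmap H pr R b)) c" .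
qed

lemma Qmap_add: "Qmap H pr R (a + b) = Qmap H pr R a + Qmap H pr R b"
proof (rule eq_by_pairing)
  fix c
  have pr_c: "linH (\<lambda>z. pr z c)"
    by (intro lin_intros)
  show "pr (Qmap H pr R (a + b)) c = pr (Qmap H pr R a + Qmap H pr R b) c"
    by (simp add: lin_map_add[OF pr_c] lin_Qmap[OF pr_c] lin_map_add[OF lin_pr_right]
        algebra_simps tsum_add[symmetric])
qed

lemma Qmap_scale: "Qmap H pr R (hscl A k a) = sc k (Qmap H pr R a)"
proof (rule eq_by_pairing)
  fix c
  have pr_c: "linH (\<lambda>z. pr z c)"
    by (intro lin_intros)
  show "pr (Qmap H pr R (hscl A k a)) c = pr (sc k (Qmap H pr R a)) c"
    by (simp add: lin_map_scale[OF pr_c] lin_Qmap[OF pr_c] pr_scale_A tsum_mult_left mult.assoc)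
qed

lemma Qmap_one: "Qmap H pr R (hone A) = e1"
proof (rule eq_by_pairing)
  fix c
  have pr_c: "linH (\<lambda>z. pr z c)"
    by (intro lin_intros)
  have counit_x: "tsum R (\<lambda>x' y'. \<epsilon> x' * pr (m x y') c) = pr x c" for x
    using R_counit_left[of "\<lambda>z. pr (m x z) c"] by (simp add: lin_intros)
  have "pr (Qmap H pr R (hone A)) c = tsum R (\<lambda>x y. \<epsilon> y * tsum R (\<lambda>x' y'. \<epsilon> x' * pr (m x y') c))"
    by (simp add: lin_Qmap[OF pr_c] tsum_Q pr_one_A eps_mult tsum_mult_left mult.assoc)
  also have "\<dots> = pr e1 c"
    by (simp add: counit_x R_counit_right[OF pr_c])
  finally show "pr (Qmap H pr R (hone A)) c = pr e1 c" .
qed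

subsection \<open>Q is covariant\<close>

lemma adjoint_transfer:
  assumes comm: "\<And>h G. bil G \<Longrightarrow> tsum X (\<lambda>q1 q2. tsum (\<Delta> h) (\<lambda>p q. G (m q1 p) (m q2 q)))
                                = tsum X (\<lambda>q1 q2. tsum (\<Delta> h) (\<lambda>p q. G (m p q1) (m q q2)))"
    and G: "bil G"
  shows "tsum X (\<lambda>q1 q2. tsum (\<Delta> h) (\<lambda>h1 h2. G (m (S h1) (m q1 h2)) q2))
       = tsum X (\<lambda>q1 q2. tsum (\<Delta> h) (\<lambda>h1 h2. G q1 (m h1 (m q2 (S h2)))))"
proof -
  note lin = lin_intros linH_bil1[OF G] linH_bil2[OF G]
  have "tsum X (\<lambda>q1 q2. tsum (\<Delta> h) (\<lambda>h1 h2. G (m (S h1) (m q1 h2)) q2))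
      = tsum X (\<lambda>q1 q2. tsum (\<Delta> h) (\<lambda>h1 h2. tsum (\<Delta> h2) (\<lambda>w f. tsum (\<Delta> w) (\<lambda>c e.
          G (m (S h1) (m q1 c)) (m q2 (m e (S f)))))))"
  proof (intro tsum_cong)
    fix q1 q2 h1 h2
    show "G (m (S h1) (m q1 h2)) q2 = tsum (\<Delta> h2) (\<lambda>w f. tsum (\<Delta> w) (\<lambda>c e.
        G (m (S h1) (m q1 c)) (m q2 (m e (S f)))))"
      using antipode_insert[OF G, of "m (S h1) q1" h2 q2] by (simp add: m_assoc)
  qed
  also have "\<dots> = tsum (\<Delta> h) (\<lambda>h1 h2. tsum (\<Delta> h2) (\<lambda>w f. tsum X (\<lambda>q1 q2. tsum (\<Delta> w) (\<lambda>c e.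
      G (m (S h1) (m q1 c)) (m q2 (m e (S f)))))))"
    by (rule tsum_rotate_dep)
  also have "\<dots> = tsum (\<Delta> h) (\<lambda>h1 h2. tsum (\<Delta> h2) (\<lambda>w f. tsum X (\<lambda>q1 q2. tsum (\<Delta> w) (\<lambda>c e.
      G (m (m (S h1) c) q1) (m (m e q2) (S f))))))"
  proof (rule tsum_cong, rule tsum_cong)
    fix h1 h2 w f
    have "bil (\<lambda>u v. G (m (S h1) u) (m v (S f)))"
      by (intro lin)
    from comm[OF this, of w]
    show "tsum X (\<lambda>q1 q2. tsum (\<Delta> w) (\<lambda>c e. G (m (S h1) (m q1 c)) (m q2 (m e (S f)))))
      = tsum X (\<lambda>q1 q2. tsum (\<Delta> w) (\<lambda>c e. G (m (m (S h1) c) q1) (m (m e q2) (S f))))"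
      by (simp add: m_assoc)
  qed
  also have "\<dots> = tsum (\<Delta> h) (\<lambda>h1 h2. tsum (\<Delta> h2) (\<lambda>w f. tsum (\<Delta> w) (\<lambda>c e. tsum X (\<lambda>q1 q2.
      G (m (m (S h1) c) q1) (m (m e q2) (S f))))))"
    by (intro tsum_cong tsum_swap)
  also have "\<dots> = tsum (\<Delta> h) (\<lambda>e f. tsum X (\<lambda>q1 q2. G (m e1 q1) (m (m e q2) (S f))))"
    by (rule antipode_left_cop3) (intro lin)
  also have "\<dots> = tsum X (\<lambda>q1 q2. tsum (\<Delta> h) (\<lambda>h1 h2. G q1 (m h1 (m q2 (S h2)))))"
    by (rule trans[OF tsum_swap]) (simp add: m_assoc)
  finally show ?thesis .
qed

lemma Q_commutes_cop:
  assumes G: "bil G"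
  shows "tsum Q (\<lambda>q1 q2. tsum (\<Delta> h) (\<lambda>p q. G (m q1 p) (m q2 q)))
       = tsum Q (\<lambda>q1 q2. tsum (\<Delta> h) (\<lambda>p q. G (m p q1) (m q q2)))"
proof -
  note lin = lin_intros linH_bil1[OF G] linH_bil2[OF G]
  have "tsum Q (\<lambda>q1 q2. tsum (\<Delta> h) (\<lambda>p q. G (m q1 p) (m q2 q)))
      = tsum R (\<lambda>x y. tsum (\<Delta> h) (\<lambda>p q. tsum R (\<lambda>x' y'. G (m (m y q) x') (m (m x p) y'))))"
    unfolding tsum_Q
  proof (rule tsum_cong)
    fix x y
    have "bil (\<lambda>u v. G (m y u) (m x v))"
      by (intro lin)
    from R_quasi_cocomm[OF this, of h]
    show "tsum R (\<lambda>x' y'. tsum (\<Delta> h) (\<lambda>p q. G (m (m y x') p) (m (m x y') q)))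
      = tsum (\<Delta> h) (\<lambda>p q. tsum R (\<lambda>x' y'. G (m (m y q) x') (m (m x p) y')))"
      by (simp add: m_assoc)
  qed
  also have "\<dots> = tsum (\<Delta> h) (\<lambda>p q. tsum R (\<lambda>x y. tsum R (\<lambda>x' y'. G (m (m p y) x') (m (m q x) y'))))"
  proof -
    have "bil (\<lambda>u v. tsum R (\<lambda>x' y'. G (m v x') (m u y')))"
      by (intro lin)
    from R_quasi_cocomm[OF this, of h] show ?thesis
      by (simp add: m_assoc)
  qed
  also have "\<dots> = tsum Q (\<lambda>q1 q2. tsum (\<Delta> h) (\<lambda>p q. G (m p q1) (m q q2)))"
    unfolding tsum_Q by (rule trans[OF _ tsum_rotate]) (simp add: m_assoc)
  finally show ?thesis .
qed

lemma Q_cop_right: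
  assumes G: "tril G"
  shows "tsum Q (\<lambda>q1 q2. tsum (\<Delta> q2) (\<lambda>s t. G q1 s t))
       = tsum R (\<lambda>r1 r2. tsum Q (\<lambda>q1 q2. tsum R (\<lambda>r1' r2'. G (m r2 (m q1 r1')) (m r1 r2') q2)))"
proof -
  note lin = lin_intros linH_tril1[OF G] linH_tril2[OF G] linH_tril3[OF G]
  have "tsum Q (\<lambda>q1 q2. tsum (\<Delta> q2) (\<lambda>s t. G q1 s t))
      = tsum R (\<lambda>x y. tsum R (\<lambda>x' y'. tsum (\<Delta> x) (\<lambda>s1 t1. tsum (\<Delta> y') (\<lambda>s2 t2.
          G (m y x') (m s1 s2) (m t1 t2)))))"
    unfolding tsum_Q by (intro tsum_cong cop_mult lin)
  also have "\<dots> = tsum R (\<lambda>x y. tsum (\<Delta> x) (\<lambda>s1 t1. tsum R (\<lambda>x' y'. tsum (\<Delta> y') (\<lambda>s2 t2.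
      G (m y x') (m s1 s2) (m t1 t2)))))"
    by (intro tsum_cong tsum_swap)
  also have "\<dots> = tsum R (\<lambda>x y. tsum R (\<lambda>x2 y2. tsum R (\<lambda>x' y'. tsum (\<Delta> y') (\<lambda>s2 t2.
      G (m (m y y2) x') (m x s2) (m x2 t2)))))"
    by (rule R_cop_left) (intro lin)
  also have "\<dots> = tsum R (\<lambda>x y. tsum R (\<lambda>x2 y2. tsum R (\<lambda>x' y'. tsum R (\<lambda>x3 y3.
      G (m (m y y2) (m x' x3)) (m x y3) (m x2 y')))))"
    by (rule tsum_cong, rule tsum_cong, rule R_cop_right) (intro lin)
  also have "\<dots> = tsum R (\<lambda>r1 r2. tsum Q (\<lambda>q1 q2. tsum R (\<lambda>r1' r2'. G (m r2 (m q1 r1')) (m r1 r2') q2)))"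
    by (simp add: tsum_Q m_assoc)
  finally show ?thesis .
qed

lemma Qmap_actA: "Qmap H pr R (actA A pr R h a b) = actH H pr h a (Qmap H pr R b)"
proof (rule eq_by_pairing)
  fix c
  define \<Phi> where "\<Phi> \<beta> \<gamma> = tsum R (\<lambda>r1 r2. tsum R (\<lambda>r1' r2'.
      pr (m r1 r2') a * pr (m r2 (m \<beta> r1')) b * pr \<gamma> c))" for \<beta> \<gamma>
  define \<Psi> where "\<Psi> \<beta> \<alpha> \<gamma> = tsum (\<Delta> h) (\<lambda>h1 h2. pr \<alpha> a * pr \<beta> b * pr (m h1 (m \<gamma> (S h2))) c)"
    for \<beta> \<alpha> \<gamma>
  have "bil \<Phi>"
    unfolding \<Phi>_def by (intro lin_intros)
  have "tril \<Psi>"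
    unfolding \<Psi>_def by (intro lin_intros)
  have pr_c: "linH (\<lambda>z. pr z c)"
    by (intro lin_intros)
  have "pr (Qmap H pr R (actA A pr R h a b)) c = tsum Q (\<lambda>q1 q2. pr q1 (actA A pr R h a b) * pr q2 c)"
    by (rule lin_Qmap[OF pr_c])
  also have "\<dots> = tsum Q (\<lambda>q1 q2. tsum (\<Delta> h) (\<lambda>h1 h2. \<Phi> (m (S h1) (m q1 h2)) q2))"
    by (simp add: pr_actA \<Phi>_def tsum_mult_right)
  also have "\<dots> = tsum Q (\<lambda>q1 q2. tsum (\<Delta> h) (\<lambda>h1 h2. \<Phi> q1 (m h1 (m q2 (S h2)))))"
    by (rule adjoint_transfer[OF Q_commutes_cop \<open>bil \<Phi>\<close>])
  also have "\<dots> = tsum Q (\<lambda>q1 q2. tsum R (\<lambda>r1 r2. tsum R (\<lambda>r1' r2'. \<Psi> (m r2 (m q1 r1')) (m r1 r2') q2)))"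
    unfolding \<Phi>_def \<Psi>_def
    by (intro tsum_cong) (simp add: tsum_rotate[of "\<Delta> h" R R] m_assoc ac_simps)
  also have "\<dots> = tsum Q (\<lambda>q1 q2. tsum (\<Delta> q2) (\<lambda>s t. \<Psi> q1 s t))"
    by (simp only: tsum_swap[of Q R] Q_cop_right[OF \<open>tril \<Psi>\<close>])
  also have "\<dots> = pr (actH H pr h a (Qmap H pr R b)) c"
  proof -
    have "linH (\<lambda>\<phi>. tsum (\<Delta> \<phi>) (\<lambda>p1 p2. tsum (\<Delta> h) (\<lambda>h1 h2. pr p1 a * pr (m (m h1 p2) (S h2)) c)))"
      by (intro lin_intros)
    from lin_Qmap[OF this] show ?thesis
      by (simp add: pr_actH \<Psi>_def tsum_mult_left m_assoc ac_simps)
  qed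
  finally show "pr (Qmap H pr R (actA A pr R h a b)) c = pr (actH H pr h a (Qmap H pr R b)) c" .
qed

end

theorem lemma2p1:
  fixes H :: "('k::field, 'h::ab_group_add) hopf"
    and A :: "('k, 'a::ab_group_add) hopf"
    and pr :: "'h \<Rightarrow> 'a \<Rightarrow> 'k"
    and R :: "('h \<times> 'h) list"
  assumes "hopf_algebra H"
    and "hopf_algebra A"
    and "hopf_pairing H A pr"
    and "quasitriangular H R"
  shows "(\<forall>a b. Qmap H pr R (a + b) = Qmap H pr R a + Qmap H pr R b)
       \<and> (\<forall>c a. Qmap H pr R (hscl A c a) = hscl H c (Qmap H pr R a))
       \<and> (\<forall>a b. Qmap H pr R (bmul A pr R a b) = hmul H (Qmap H pr R a) (Qmap H pr R b))
       \<and> Qmap H pr R (hone A) = hone H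
       \<and> (\<forall>h a b. Qmap H pr R (actA A pr R h a b) = actH H pr h a (Qmap H pr R b))"
proof -
  interpret qt_dual_pair H A pr R
    using assms(1,3,4) by unfold_locales
  show ?thesis
    using Qmap_add Qmap_scale Qmap_bmul Qmap_one Qmap_actA by blast
qed

end
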